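(* Let $G_{\|v_0}$ be a well-initialized prefix-independent game with steady negotiation, let $\epsilon\ge0$, and let $\lambda$ be an $\epsilon$-fixed point of the negotiation function. Then for every $\lambda$-consistent play $\xi$ starting in $v_0$, there exists an $\epsilon$-SPE $\bar\sigma$ in $G_{\|v_0}$ such that $\langle\bar\sigma\rangle_{v_0}=\xi$.
   Context: A game is a tuple $G=(\Pi,V,(V_i)_{i\in\Pi},E,\mu)$ where $\Pi$ is a finite set of players, $(V,E)$ is a finite directed graph in which every vertex has at least one outgoing edge, $(V_i)_{i\in\Pi}$ is a partition of $V$, and $\mu:V^\omega\to\mathbb{R}^\Pi$ is the outcome function. Plays, histories, strategies, profiles, compatibility and $\langle\bar\sigma\rangle_v$ are as usual; $G_{\|v_0}$ is $G$ initialized at $v_0$ and is well-initialized if every vertex is reachable from $v_0$; $-i$ denotes $\Pi\setminus\{i\}$; $\bar\sigma_{\|hv}$ is the profile in $G_{\|v}$ with $\sigma_{j\|hv}(h')=\sigma_j(hh')$. $G$ is prefix-independent if $\mu(h\rho)=\mu(\rho)$ for every history $h$ and play $\rho$. A profile $\bar\sigma$ in $G_{\|v_0}$ is an $\epsilon$-SPE if for every history $hv$ of $G_{\|v_0}$, every player $i$ and strategy $\sigma'_i$, $\mu_i(h\langle\bar\sigma_{-i\|hv},\sigma'_{i\|hv}\rangle_v)\le\mu_i(h\langle\bar\sigma_{\|hv}\rangle_v)+\epsilon$. A requirement is a map $\lambda:V\to\mathbb{R}\cup\{\pm\infty\}$. A play $\rho$ is $\lambda$-consistent if for every $i\in\Pi$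 and $n$ with $\rho_n\in V_i$, $\mu_i(\rho_n\rho_{n+1}\cdots)\ge\lambda(\rho_n)$. $\lambda\mathrm{Rat}_i(v)$ is the set of profiles $\bar\sigma_{-i}$ in $G_{\|v}$ for which there exists $\sigma_i$ such that for every history $hw$ from $v$ compatible with $\bar\sigma_{-i}$, $\langle\bar\sigma_{\|hw}\rangle_w$ is $\lambda$-consistent. For $i\in\Pi$, $v\in V_i$: $\mathrm{nego}(\lambda)(v)=\inf_{\bar\sigma_{-i}\in\lambda\mathrm{Rat}_i(v)}\sup_{\sigma_i}\mu_i(\langle\bar\sigma_{-i},\sigma_i\rangle_v)$, $\inf\emptyset=+\infty$. $\lambda$ is an $\epsilon$-fixed point of $\mathrm{nego}$ if $\lambda(v)-\epsilon\le\mathrm{nego}(\lambda)(v)\le\lambda(v)+\epsilon$ for all $v$ (with $\pm\infty\pm\epsilon=\pm\infty$). $G$ is with steady negotiation if for every player $i$, vertex $v$ and requirement $\lambda$, the set $\{\sup_{\sigma_i}\mu_i(\langle\bar\sigma_{-i},\sigma_i\rangle_v)\mid\bar\sigma_{-i}\in\lambda\mathrm{Rat}_i(v)\}$ is empty or has a minimum. *)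

theory Defs
  imports Complex_Main "HOL-Library.Extended_Real"
begin

text \<open>Conventions: the set of players is the finite type 'p (Pi = UNIV), the set of
vertices is the finite type 'v (V = UNIV), the partition (V_i) is given by an owner
function owner :: 'v => 'p (V_i = owner -` {i}), E is the edge relation, and
mu :: (nat => 'v) => 'p => real is the outcome function (mu rho i = mu_i(rho)).
Plays are infinite sequences, histories are nonempty finite lists.\<close>

definition game_edges :: "('v \<times> 'v) set \<Rightarrow> bool" where
  "game_edges E = (\<forall>v. \<exists>w. (v, w) \<in> E)"

definition is_play :: "('v \<times> 'v) set \<Rightarrow> (nat \<Rightarrow> 'v) \<Rightarrow> bool" where
  "is_play E \<rho> = (\<forall>n. (\<rho> n, \<rho> (Suc n)) \<in> E)"

definition is_hist :: "('v \<times> 'v) set \<Rightarrow> 'v list \<Rightarrow> bool" where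
  "is_hist E h = (h \<noteq> [] \<and> (\<forall>k. Suc k < length h \<longrightarrow> (h ! k, h ! Suc k) \<in> E))"

definition is_strategy :: "('v \<times> 'v) set \<Rightarrow> ('v \<Rightarrow> 'p) \<Rightarrow> 'p \<Rightarrow> ('v list \<Rightarrow> 'v) \<Rightarrow> bool" where
  "is_strategy E owner i s = (\<forall>h. h \<noteq> [] \<and> owner (last h) = i \<longrightarrow> (last h, s h) \<in> E)"

definition is_profile :: "('v \<times> 'v) set \<Rightarrow> ('v \<Rightarrow> 'p) \<Rightarrow> ('p \<Rightarrow> 'v list \<Rightarrow> 'v) \<Rightarrow> bool" where
  "is_profile E owner \<sigma> = (\<forall>i. is_strategy E owner i (\<sigma> i))"

fun out_hist :: "('v \<Rightarrow> 'p) \<Rightarrow> ('p \<Rightarrow> 'v list \<Rightarrow> 'v) \<Rightarrow> 'v \<Rightarrow> nat \<Rightarrow> 'v list" where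
  "out_hist owner \<sigma> v 0 = [v]"
| "out_hist owner \<sigma> v (Suc n) =
     (let h = out_hist owner \<sigma> v n in h @ [\<sigma> (owner (last h)) h])"

definition outcome :: "('v \<Rightarrow> 'p) \<Rightarrow> ('p \<Rightarrow> 'v list \<Rightarrow> 'v) \<Rightarrow> 'v \<Rightarrow> nat \<Rightarrow> 'v" where
  "outcome owner \<sigma> v = (\<lambda>n. last (out_hist owner \<sigma> v n))"

definition restr :: "('p \<Rightarrow> 'v list \<Rightarrow> 'v) \<Rightarrow> 'v list \<Rightarrow> ('p \<Rightarrow> 'v list \<Rightarrow> 'v)" where
  "restr \<sigma> h = (\<lambda>j h'. \<sigma> j (h @ h'))"

definition conc :: "'v list \<Rightarrow> (nat \<Rightarrow> 'v) \<Rightarrow> nat \<Rightarrow> 'v" where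
  "conc h \<rho> = (\<lambda>n. if n < length h then h ! n else \<rho> (n - length h))"

definition suffix :: "(nat \<Rightarrow> 'v) \<Rightarrow> nat \<Rightarrow> nat \<Rightarrow> 'v" where
  "suffix \<rho> n = (\<lambda>k. \<rho> (n + k))"

definition prefix_independent :: "('v \<times> 'v) set \<Rightarrow> ((nat \<Rightarrow> 'v) \<Rightarrow> 'p \<Rightarrow> real) \<Rightarrow> bool" where
  "prefix_independent E \<mu> =
     (\<forall>h \<rho>. is_hist E h \<and> is_play E \<rho> \<and> (last h, \<rho> 0) \<in> E \<longrightarrow> \<mu> (conc h \<rho>) = \<mu> \<rho>)"

definition well_initialized :: "('v \<times> 'v) set \<Rightarrow> 'v \<Rightarrow> bool" where
  "well_initialized E v0 = (\<forall>v. (v0, v) \<in> E\<^sup>*)"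

definition eps_SPE ::
  "('v \<times> 'v) set \<Rightarrow> ('v \<Rightarrow> 'p) \<Rightarrow> ((nat \<Rightarrow> 'v) \<Rightarrow> 'p \<Rightarrow> real) \<Rightarrow> real \<Rightarrow> 'v
     \<Rightarrow> ('p \<Rightarrow> 'v list \<Rightarrow> 'v) \<Rightarrow> bool" where
  "eps_SPE E owner \<mu> \<epsilon> v0 \<sigma> =
     (is_profile E owner \<sigma> \<and>
      (\<forall>h v i \<sigma>'. is_hist E (h @ [v]) \<and> hd (h @ [v]) = v0 \<and> is_strategy E owner i \<sigma>' \<longrightarrow>
         \<mu> (conc h (outcome owner (restr (\<sigma>(i := \<sigma>')) h) v)) i
           \<le> \<mu> (conc h (outcome owner (restr \<sigma> h) v)) i + \<epsilon>))"

definition lam_consistent ::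
  "('v \<Rightarrow> 'p) \<Rightarrow> ((nat \<Rightarrow> 'v) \<Rightarrow> 'p \<Rightarrow> real) \<Rightarrow> ('v \<Rightarrow> ereal) \<Rightarrow> (nat \<Rightarrow> 'v) \<Rightarrow> bool" where
  "lam_consistent owner \<mu> lam \<rho> = (\<forall>n. ereal (\<mu> (suffix \<rho> n) (owner (\<rho> n))) \<ge> lam (\<rho> n))"

definition compatible_minus ::
  "('v \<Rightarrow> 'p) \<Rightarrow> 'p \<Rightarrow> ('p \<Rightarrow> 'v list \<Rightarrow> 'v) \<Rightarrow> 'v list \<Rightarrow> bool" where
  "compatible_minus owner i \<tau> hw =
     (\<forall>k. Suc k < length hw \<longrightarrow> owner (hw ! k) \<noteq> i \<longrightarrow>
          hw ! Suc k = \<tau> (owner (hw ! k)) (take (Suc k) hw))"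

text \<open>lambda Rat_i(v). A profile sigma_{-i} is represented by a full profile whose
i-component is ignored.\<close>
definition lamRat ::
  "('v \<times> 'v) set \<Rightarrow> ('v \<Rightarrow> 'p) \<Rightarrow> ((nat \<Rightarrow> 'v) \<Rightarrow> 'p \<Rightarrow> real) \<Rightarrow> ('v \<Rightarrow> ereal) \<Rightarrow> 'p \<Rightarrow> 'v
     \<Rightarrow> ('p \<Rightarrow> 'v list \<Rightarrow> 'v) set" where
  "lamRat E owner \<mu> lam i v =
     {\<tau>. (\<forall>j. j \<noteq> i \<longrightarrow> is_strategy E owner j (\<tau> j)) \<and>
          (\<exists>\<sigma>i. is_strategy E owner i \<sigma>i \<and>
             (\<forall>h w. is_hist E (h @ [w]) \<and> hd (h @ [w]) = v \<and> compatible_minus owner i \<tau> (h @ [w])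
                \<longrightarrow> lam_consistent owner \<mu> lam (outcome owner (restr (\<tau>(i := \<sigma>i)) h) w)))}"

definition best_value ::
  "('v \<times> 'v) set \<Rightarrow> ('v \<Rightarrow> 'p) \<Rightarrow> ((nat \<Rightarrow> 'v) \<Rightarrow> 'p \<Rightarrow> real) \<Rightarrow> 'p \<Rightarrow> 'v
     \<Rightarrow> ('p \<Rightarrow> 'v list \<Rightarrow> 'v) \<Rightarrow> ereal" where
  "best_value E owner \<mu> i v \<tau> =
     (SUP \<sigma>i \<in> {s. is_strategy E owner i s}. ereal (\<mu> (outcome owner (\<tau>(i := \<sigma>i)) v) i))"

definition nego ::
  "('v \<times> 'v) set \<Rightarrow> ('v \<Rightarrow> 'p) \<Rightarrow> ((nat \<Rightarrow> 'v) \<Rightarrow> 'p \<Rightarrow> real) \<Rightarrow> ('v \<Rightarrow> ereal) \<Rightarrow> 'v \<Rightarrow> ereal" where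
  "nego E owner \<mu> lam v =
     (INF \<tau> \<in> lamRat E owner \<mu> lam (owner v) v. best_value E owner \<mu> (owner v) v \<tau>)"

definition eps_fixed_point ::
  "('v \<times> 'v) set \<Rightarrow> ('v \<Rightarrow> 'p) \<Rightarrow> ((nat \<Rightarrow> 'v) \<Rightarrow> 'p \<Rightarrow> real) \<Rightarrow> real \<Rightarrow> ('v \<Rightarrow> ereal) \<Rightarrow> bool" where
  "eps_fixed_point E owner \<mu> \<epsilon> lam =
     (\<forall>v. lam v - ereal \<epsilon> \<le> nego E owner \<mu> lam v \<and> nego E owner \<mu> lam v \<le> lam v + ereal \<epsilon>)"

definition steady_negotiation ::
  "('v \<times> 'v) set \<Rightarrow> ('v \<Rightarrow> 'p) \<Rightarrow> ((nat \<Rightarrow> 'v) \<Rightarrow> 'p \<Rightarrow> real) \<Rightarrow> bool" where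
  "steady_negotiation E owner \<mu> =
     (\<forall>i v lam. let S = best_value E owner \<mu> i v ` lamRat E owner \<mu> lam i v
              in S = {} \<or> (\<exists>m\<in>S. \<forall>x\<in>S. m \<le> x))"

end

theory Submission
  imports Defs
begin

text \<open>The players follow \<open>\<xi>\<close> as long as nobody deviates. When the owner \<open>i\<close> of a vertex \<open>u\<close>
  deviates there, the others switch to a profile \<open>T u\<close> that is \<open>\<lambda>\<close>-rational against \<open>i\<close> and
  holds the best response of \<open>i\<close> to at most \<open>nego(\<lambda>)(u) \<le> \<lambda>(u) + \<epsilon>\<close>; steady negotiation
  provides such a minimiser, and \<open>\<lambda>(u)\<close> is finite because the prescribed continuation at
  \<open>u\<close> is itself \<open>\<lambda>\<close>-consistent. Hence a player who deviates at one of his vertices \<open>v\<close>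
  would have obtained at least \<open>\<lambda>(v)\<close> by complying. Repeated deviations of the same player
  only restart his punishment from vertices of strictly smaller requirement, so eventually
  a single punishment, from some \<open>u\<close> with \<open>\<lambda>(u) \<le> \<lambda>(v)\<close>, is followed forever; by prefix
  independence it bounds his payoff by \<open>\<lambda>(u) + \<epsilon> \<le> \<lambda>(v) + \<epsilon>\<close>.\<close>

section \<open>Plays and histories\<close>

lemma first_difference:
  assumes "f \<noteq> g" and "f 0 = g 0"
  obtains n where "\<And>i. i \<le> n \<Longrightarrow> f i = g i" and "f (Suc n) \<noteq> g (Suc n)"
proof -
  define d where "d = (LEAST d. f d \<noteq> g d)"
  have "\<exists>d. f d \<noteq> g d"
    using assms(1) by auto
  then have diff: "f d \<noteq> g d"
    unfolding d_def by (rule LeastI_ex)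
  have same: "f i = g i" if "i < d" for i
    using not_less_Least[of i "\<lambda>d. f d \<noteq> g d"] that unfolding d_def by blast
  obtain n where "d = Suc n"
    using diff assms(2) by (cases d) auto
  show ?thesis
  proof (rule that)
    show "f i = g i" if "i \<le> n" for i
      using same that \<open>d = Suc n\<close> by simp
    show "f (Suc n) \<noteq> g (Suc n)"
      using diff \<open>d = Suc n\<close> by simp
  qed
qed

lemma eventually_const_by_descent:
  fixes f :: "nat \<Rightarrow> 'a" and lv :: "nat \<Rightarrow> 'b::linorder"
  assumes "finite (lv ` {m..})"
    and "\<And>n. m \<le> n \<Longrightarrow> lv (Suc n) \<le> lv n"
    and "\<And>n. m \<le> n \<Longrightarrow> f (Suc n) \<noteq> f n \<Longrightarrow> lv (Suc n) < lv n"
  obtains N where "m \<le> N" and "\<And>n. m \<le> n \<Longrightarrow> lv N \<le> lv n" and "\<And>n. N \<le> n \<Longrightarrow> f n = f N"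
proof -
  obtain N where N: "m \<le> N" "lv N = Min (lv ` {m..})"
    using Min_in[OF assms(1)] by auto
  have min: "lv N \<le> lv n" if "m \<le> n" for n
    using Min_le[OF assms(1), of "lv n"] N(2) that by simp
  have le: "lv n \<le> lv N" if "N \<le> n" for n
    using that
  proof (induction rule: dec_induct)
    case (step n)
    have "lv (Suc n) \<le> lv n"
      using assms(2) N(1) step.hyps by simp
    then show ?case
      using step.IH by simp
  qed simp
  have "f n = f N" if "N \<le> n" for n
    using that
  proof (induction rule: dec_induct)
    case (step n)
    have "\<not> lv (Suc n) < lv n"
      using le[of n] min[of "Suc n"] N(1) step.hyps by simp
    moreover have "m \<le> n"
      using N(1) step.hyps by simp
    ultimately show ?case
      using assms(3)[of n] step.IH by auto
  qed simp
  then show ?thesis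
    using that N(1) min by blast
qed

definition pref :: "(nat \<Rightarrow> 'v) \<Rightarrow> nat \<Rightarrow> 'v list" where
  "pref \<pi> n = map \<pi> [0..<Suc n]"

lemma length_pref [simp]: "length (pref \<pi> n) = Suc n"
  by (simp add: pref_def)

lemma pref_nonempty [simp]: "pref \<pi> n \<noteq> []"
  by (simp add: pref_def)

lemma nth_pref [simp]: "i \<le> n \<Longrightarrow> pref \<pi> n ! i = \<pi> i"
  by (simp add: pref_def nth_append del: upt_Suc)

lemma last_pref [simp]: "last (pref \<pi> n) = \<pi> n"
  by (simp add: pref_def)

lemma pref_0 [simp]: "pref \<pi> 0 = [\<pi> 0]"
  by (simp add: pref_def)

lemma pref_Suc: "pref \<pi> (Suc n) = pref \<pi> n @ [\<pi> (Suc n)]"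
  by (simp add: pref_def)

lemma take_pref: "i \<le> n \<Longrightarrow> take (Suc i) (pref \<pi> n) = pref \<pi> i"
  by (simp add: pref_def take_map del: upt_Suc)

lemma pref_cong: "(\<And>i. i \<le> n \<Longrightarrow> f i = g i) \<Longrightarrow> pref f n = pref g n"
  by (simp add: pref_def del: upt_Suc)

lemma drop_pref: "k \<le> n \<Longrightarrow> drop k (pref \<pi> n) = pref (suffix \<pi> k) (n - k)"
  by (rule nth_equalityI) (auto simp: suffix_def)

lemma pref_add: "pref \<pi> (Suc m + n) = pref \<pi> m @ pref (suffix \<pi> (Suc m)) n"
  by (rule nth_equalityI) (auto simp: nth_append suffix_def)

lemma is_hist_pref: "is_play E \<pi> \<Longrightarrow> is_hist E (pref \<pi> n)"
  by (auto simp: is_hist_def is_play_def)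

lemma is_hist_drop: "is_hist E h \<Longrightarrow> k < length h \<Longrightarrow> is_hist E (drop k h)"
  by (auto simp: is_hist_def)

lemma suffix_apply [simp]: "suffix \<pi> k n = \<pi> (k + n)"
  by (simp add: suffix_def)

lemma suffix_suffix [simp]: "suffix (suffix \<pi> k) l = suffix \<pi> (k + l)"
  by (simp add: suffix_def add.assoc)

lemma suffix_0 [simp]: "suffix \<pi> 0 = \<pi>"
  by (simp add: suffix_def)

lemma is_play_suffix: "is_play E \<pi> \<Longrightarrow> is_play E (suffix \<pi> k)"
  by (simp add: is_play_def)

lemma prefix_independent_suffix:
  assumes "prefix_independent E \<mu>" and "is_play E \<pi>"
  shows "\<mu> (suffix \<pi> n) = \<mu> \<pi>"
proof (cases n)
  case (Suc m)
  have "conc (pref \<pi> m) (suffix \<pi> n) = \<pi>"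
    using Suc by (auto simp: conc_def)
  moreover have "(last (pref \<pi> m), suffix \<pi> n 0) \<in> E"
    using assms(2) Suc by (simp add: is_play_def)
  ultimately show ?thesis
    using assms is_hist_pref is_play_suffix unfolding prefix_independent_def by metis
qed simp

lemma lam_consistent_suffix:
  "lam_consistent owner \<mu> lam \<pi> \<Longrightarrow> lam_consistent owner \<mu> lam (suffix \<pi> k)"
  by (simp add: lam_consistent_def)

lemma lam_consistent_suffixD:
  assumes "lam_consistent owner \<mu> lam (suffix \<pi> m)" and "m \<le> n"
  shows "lam (\<pi> n) \<le> ereal (\<mu> (suffix \<pi> n) (owner (\<pi> n)))"
proof -
  have "lam (suffix \<pi> m (n - m))
      \<le> ereal (\<mu> (suffix (suffix \<pi> m) (n - m)) (owner (suffix \<pi> m (n - m))))"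
    using assms(1) unfolding lam_consistent_def by blast
  then show ?thesis
    using assms(2) by simp
qed

section \<open>Outcomes of profiles\<close>

lemma out_hist_eq_pref: "out_hist owner Q v n = pref (outcome owner Q v) n"
proof (induction n)
  case (Suc n)
  have "outcome owner Q v (Suc n) = Q (owner (last (out_hist owner Q v n))) (out_hist owner Q v n)"
    by (simp add: outcome_def Let_def)
  then show ?case
    by (simp add: pref_Suc Let_def Suc.IH)
qed (simp add: outcome_def)

lemma outcome_0 [simp]: "outcome owner Q v 0 = v"
  by (simp add: outcome_def)

lemma outcome_Suc:
  "outcome owner Q v (Suc n) = Q (owner (outcome owner Q v n)) (pref (outcome owner Q v) n)"
proof -
  have "outcome owner Q v (Suc n) = Q (owner (last (out_hist owner Q v n))) (out_hist owner Q v n)"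
    by (simp add: outcome_def Let_def)
  then show ?thesis
    by (simp add: out_hist_eq_pref)
qed

lemma outcome_unique:
  assumes "\<rho> 0 = v" and "\<And>n. \<rho> (Suc n) = Q (owner (\<rho> n)) (pref \<rho> n)"
  shows "outcome owner Q v = \<rho>"
proof -
  have "\<forall>i\<le>n. outcome owner Q v i = \<rho> i" for n
  proof (induction n)
    case (Suc n)
    then have "pref (outcome owner Q v) n = pref \<rho> n"
      by (intro pref_cong) auto
    then have "outcome owner Q v (Suc n) = \<rho> (Suc n)"
      using Suc by (simp add: outcome_Suc assms(2))
    then show ?case
      using Suc le_Suc_eq by auto
  qed (simp add: assms(1))
  then show ?thesis
    by auto
qed

lemma conc_nth_le: "i \<le> length h \<Longrightarrow> conc h (outcome owner Q v) i = (h @ [v]) ! i"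
  by (auto simp: conc_def nth_append)

lemma conc_add [simp]: "conc h \<rho> (length h + t) = \<rho> t"
  by (simp add: conc_def)

lemma pref_conc: "pref (conc h \<rho>) (length h + n) = h @ pref \<rho> n"
  by (rule nth_equalityI) (auto simp: conc_def nth_append)

lemma conc_outcome_Suc:
  assumes "length h \<le> n"
  shows "conc h (outcome owner (restr Q h) v) (Suc n)
    = Q (owner (conc h (outcome owner (restr Q h) v) n)) (pref (conc h (outcome owner (restr Q h) v)) n)"
proof -
  let ?\<rho> = "outcome owner (restr Q h) v"
  obtain t where t: "n = length h + t"
    using assms le_Suc_ex by blast
  have "conc h ?\<rho> (Suc n) = ?\<rho> (Suc t)"
    using conc_add[of h ?\<rho> "Suc t"] t by simp
  also have "\<dots> = Q (owner (?\<rho> t)) (h @ pref ?\<rho> t)"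
    by (simp add: outcome_Suc restr_def)
  also have "h @ pref ?\<rho> t = pref (conc h ?\<rho>) n"
    using t pref_conc by metis
  also have "?\<rho> t = conc h ?\<rho> n"
    using t conc_add by metis
  finally show ?thesis .
qed

lemma is_play_conc_outcome:
  assumes "is_profile E owner Q" and "is_hist E (h @ [v])"
  shows "is_play E (conc h (outcome owner (restr Q h) v))" (is "is_play E ?\<pi>")
  unfolding is_play_def
proof
  fix n
  show "(?\<pi> n, ?\<pi> (Suc n)) \<in> E"
  proof (cases "Suc n \<le> length h")
    case True
    then show ?thesis
      using assms(2) conc_nth_le[of n h owner "restr Q h" v] conc_nth_le[of "Suc n" h owner "restr Q h" v]
      by (simp add: is_hist_def)
  next
    case False
    have "is_strategy E owner (owner (?\<pi> n)) (Q (owner (?\<pi> n)))"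
      using assms(1) by (simp add: is_profile_def)
    then have "(last (pref ?\<pi> n), Q (owner (?\<pi> n)) (pref ?\<pi> n)) \<in> E"
      unfolding is_strategy_def by (metis last_pref pref_nonempty)
    then show ?thesis
      using False conc_outcome_Suc[of h n owner Q v] by simp
  qed
qed

lemma is_profile_fun_upd:
  "is_profile E owner Q \<Longrightarrow> is_strategy E owner i s \<Longrightarrow> is_profile E owner (Q(i := s))"
  by (simp add: is_profile_def)

lemma profile_exists:
  assumes "game_edges E"
  shows "\<exists>Q. is_profile E owner Q"
proof -
  have "(last h, SOME w. (last h, w) \<in> E) \<in> E" for h
    using assms by (metis game_edges_def someI_ex)
  then show ?thesis
    by (intro exI[of _ "\<lambda>_ h. SOME w. (last h, w) \<in> E"]) (simp add: is_profile_def is_strategy_def)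
qed

lemma best_value_ge:
  assumes "game_edges E" and "is_play E \<rho>"
    and "\<And>n. owner (\<rho> n) \<noteq> i \<Longrightarrow> \<rho> (Suc n) = Q (owner (\<rho> n)) (pref \<rho> n)"
  shows "ereal (\<mu> \<rho> i) \<le> best_value E owner \<mu> i (\<rho> 0) Q"
proof -
  define s where "s g = (if g = pref \<rho> (length g - 1) then \<rho> (length g) else (SOME w. (last g, w) \<in> E))"
    for g
  have "is_strategy E owner i s"
    unfolding is_strategy_def
  proof (intro allI impI)
    fix g :: "'a list"
    assume g: "g \<noteq> [] \<and> owner (last g) = i"
    show "(last g, s g) \<in> E"
    proof (cases "g = pref \<rho> (length g - 1)")
      case True
      then have "last g = \<rho> (length g - 1)"
        by (metis last_pref)
      moreover have "(\<rho> (length g - 1), \<rho> (Suc (length g - 1))) \<in> E"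
        using assms(2) unfolding is_play_def by blast
      moreover have "Suc (length g - 1) = length g"
        using g by simp
      ultimately show ?thesis
        using True by (simp add: s_def)
    next
      case False
      have "\<exists>w. (last g, w) \<in> E"
        using assms(1) unfolding game_edges_def by blast
      then show ?thesis
        using False unfolding s_def by (simp add: someI_ex[of "\<lambda>w. (last g, w) \<in> E"])
    qed
  qed
  moreover have "outcome owner (Q(i := s)) (\<rho> 0) = \<rho>"
  proof (rule outcome_unique)
    show "\<rho> (Suc n) = (Q(i := s)) (owner (\<rho> n)) (pref \<rho> n)" for n
      using assms(3)[of n] by (simp add: s_def)
  qed simp
  ultimately show ?thesis
    unfolding best_value_def by (intro SUP_upper2[of s]) auto
qed

section \<open>Punishing profiles from a fixed point of negotiation\<close>

lemma lamRat_nonempty: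
  assumes "eps_fixed_point E owner \<mu> \<epsilon> lam" and "lam u \<noteq> \<infinity>"
  shows "lamRat E owner \<mu> lam (owner u) u \<noteq> {}"
proof
  assume "lamRat E owner \<mu> lam (owner u) u = {}"
  then have "nego E owner \<mu> lam u = \<infinity>"
    by (simp add: nego_def top_ereal_def)
  moreover have "nego E owner \<mu> lam u \<le> lam u + ereal \<epsilon>"
    using assms(1) by (simp add: eps_fixed_point_def)
  ultimately show False
    using assms(2) by (cases "lam u") auto
qed

lemma optimal_punishment_exists:
  assumes "steady_negotiation E owner \<mu>" and "eps_fixed_point E owner \<mu> \<epsilon> lam"
    and "lam u \<noteq> \<infinity>"
  obtains \<tau> where "is_profile E owner \<tau>"
    and "\<And>h w. is_hist E (h @ [w]) \<Longrightarrow> hd (h @ [w]) = u \<Longrightarrow>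
      compatible_minus owner (owner u) \<tau> (h @ [w]) \<Longrightarrow>
      lam_consistent owner \<mu> lam (outcome owner (restr \<tau> h) w)"
    and "best_value E owner \<mu> (owner u) u \<tau> \<le> lam u + ereal \<epsilon>"
proof -
  let ?i = "owner u"
  let ?R = "lamRat E owner \<mu> lam ?i u"
  let ?B = "best_value E owner \<mu> ?i u ` ?R"
  have "?R \<noteq> {}"
    using assms(2,3) by (rule lamRat_nonempty)
  moreover have "?B = {} \<or> (\<exists>b\<in>?B. \<forall>x\<in>?B. b \<le> x)"
    using assms(1) unfolding steady_negotiation_def Let_def by blast
  ultimately obtain b where "b \<in> ?B" and min: "\<And>x. x \<in> ?B \<Longrightarrow> b \<le> x"
    by blast
  then obtain \<tau> where \<tau>: "\<tau> \<in> ?R" and b: "b = best_value E owner \<mu> ?i u \<tau>"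
    by blast
  from \<tau> obtain \<sigma>i where others: "\<forall>j. j \<noteq> ?i \<longrightarrow> is_strategy E owner j (\<tau> j)"
    and \<sigma>i: "is_strategy E owner ?i \<sigma>i"
    and cons: "\<forall>h w. is_hist E (h @ [w]) \<and> hd (h @ [w]) = u \<and> compatible_minus owner ?i \<tau> (h @ [w])
      \<longrightarrow> lam_consistent owner \<mu> lam (outcome owner (restr (\<tau>(?i := \<sigma>i)) h) w)"
    unfolding lamRat_def by blast
  have "Inf ?B = b"
    using \<open>b \<in> ?B\<close> min by (intro antisym Inf_lower Inf_greatest)
  then have "best_value E owner \<mu> ?i u \<tau> \<le> lam u + ereal \<epsilon>"
    using assms(2) b unfolding eps_fixed_point_def nego_def by metis
  moreover have "best_value E owner \<mu> ?i u (\<tau>(?i := \<sigma>i)) = best_value E owner \<mu> ?i u \<tau>"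
    by (simp add: best_value_def)
  moreover have "compatible_minus owner ?i (\<tau>(?i := \<sigma>i)) = compatible_minus owner ?i \<tau>"
    by (simp add: compatible_minus_def fun_eq_iff)
  moreover have "is_profile E owner (\<tau>(?i := \<sigma>i))"
    using others \<sigma>i by (simp add: is_profile_def)
  ultimately show ?thesis
    using that cons by presburger
qed

lemma punishment_profiles_exist:
  fixes lam :: "'v \<Rightarrow> ereal"
  assumes "game_edges E" and "steady_negotiation E owner \<mu>"
    and "eps_fixed_point E owner \<mu> \<epsilon> lam"
  obtains T :: "'v \<Rightarrow> 'p \<Rightarrow> 'v list \<Rightarrow> 'v" where "\<And>u. is_profile E owner (T u)"
    and "\<And>u h w. lam u \<noteq> \<infinity> \<Longrightarrow> is_hist E (h @ [w]) \<Longrightarrow> hd (h @ [w]) = u \<Longrightarrow>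
      compatible_minus owner (owner u) (T u) (h @ [w]) \<Longrightarrow>
      lam_consistent owner \<mu> lam (outcome owner (restr (T u) h) w)"
    and "\<And>u. lam u \<noteq> \<infinity> \<Longrightarrow> best_value E owner \<mu> (owner u) u (T u) \<le> lam u + ereal \<epsilon>"
proof -
  obtain Q where Q: "is_profile E owner Q"
    using profile_exists assms(1) by blast
  have "\<exists>\<tau>. is_profile E owner \<tau> \<and> (lam u \<noteq> \<infinity> \<longrightarrow>
      (\<forall>h w. is_hist E (h @ [w]) \<and> hd (h @ [w]) = u \<and> compatible_minus owner (owner u) \<tau> (h @ [w])
        \<longrightarrow> lam_consistent owner \<mu> lam (outcome owner (restr \<tau> h) w)) \<and>
      best_value E owner \<mu> (owner u) u \<tau> \<le> lam u + ereal \<epsilon>)" for u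
  proof (cases "lam u = \<infinity>")
    case False
    show ?thesis
      by (rule optimal_punishment_exists[OF assms(2,3) False]) blast
  qed (use Q in blast)
  then obtain T where "\<forall>u. is_profile E owner (T u) \<and> (lam u \<noteq> \<infinity> \<longrightarrow>
      (\<forall>h w. is_hist E (h @ [w]) \<and> hd (h @ [w]) = u \<and> compatible_minus owner (owner u) (T u) (h @ [w])
        \<longrightarrow> lam_consistent owner \<mu> lam (outcome owner (restr (T u) h) w)) \<and>
      best_value E owner \<mu> (owner u) u (T u) \<le> lam u + ereal \<epsilon>)"
    by metis
  then show ?thesis
    using that by blast
qed

datatype mode = Follow | Punish nat

locale punishment_construction =
  fixes E :: "('v::finite \<times> 'v) set" and owner :: "'v \<Rightarrow> 'p"
    and \<mu> :: "(nat \<Rightarrow> 'v) \<Rightarrow> 'p \<Rightarrow> real" and \<epsilon> :: real and lam :: "'v \<Rightarrow> ereal"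
    and \<xi> :: "nat \<Rightarrow> 'v" and v0 :: 'v and T :: "'v \<Rightarrow> 'p \<Rightarrow> 'v list \<Rightarrow> 'v"
  assumes edges: "game_edges E"
    and prefix_indep: "prefix_independent E \<mu>"
    and eps_nonneg: "\<epsilon> \<ge> 0"
    and \<xi>_play: "is_play E \<xi>" and \<xi>_0: "\<xi> 0 = v0"
    and \<xi>_consistent: "lam_consistent owner \<mu> lam \<xi>"
    and T_profile: "\<And>u. is_profile E owner (T u)"
    and T_consistent: "\<And>u h w. lam u \<noteq> \<infinity> \<Longrightarrow> is_hist E (h @ [w]) \<Longrightarrow> hd (h @ [w]) = u \<Longrightarrow>
      compatible_minus owner (owner u) (T u) (h @ [w]) \<Longrightarrow>
      lam_consistent owner \<mu> lam (outcome owner (restr (T u) h) w)"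
    and T_best: "\<And>u. lam u \<noteq> \<infinity> \<Longrightarrow> best_value E owner \<mu> (owner u) u (T u) \<le> lam u + ereal \<epsilon>"
begin

definition target :: "mode \<Rightarrow> 'v list \<Rightarrow> 'v" where
  "target s h = (case s of
      Follow \<Rightarrow> \<xi> (length h)
    | Punish k \<Rightarrow> T (h ! k) (owner (last h)) (drop k h))"

text \<open>The fallback is never taken on histories from \<open>v0\<close>: in mode \<^const>\<open>Follow\<close> these are
  prefixes of \<open>\<xi>\<close>, and each \<open>T u\<close> is a profile.\<close>

definition move :: "mode \<Rightarrow> 'v list \<Rightarrow> 'v" where
  "move s h = (if (last h, target s h) \<in> E then target s h else (SOME w. (last h, w) \<in> E))"

text \<open>Keeping the current punishment when the deviator is already punished from a vertex of no
  larger requirement makes repeated deviations of one player strictly lower the requirement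
  of the vertex his punishment starts from, so they cannot go on forever.\<close>

definition next_mode :: "mode \<Rightarrow> 'v list \<Rightarrow> mode" where
  "next_mode s h = (case s of
      Follow \<Rightarrow> Punish (length h - 1)
    | Punish k \<Rightarrow>
        if owner (h ! k) = owner (last h) \<and> lam (h ! k) \<le> lam (last h) then Punish k
        else Punish (length h - 1))"

fun mode_of :: "(nat \<Rightarrow> 'v) \<Rightarrow> nat \<Rightarrow> mode" where
  "mode_of \<pi> 0 = Follow"
| "mode_of \<pi> (Suc n) =
    (if \<pi> (Suc n) = move (mode_of \<pi> n) (pref \<pi> n) then mode_of \<pi> n
     else next_mode (mode_of \<pi> n) (pref \<pi> n))"

declare mode_of.simps(2) [simp del]

definition next_move :: "'v list \<Rightarrow> 'v" where
  "next_move h = move (mode_of (\<lambda>i. h ! i) (length h - 1)) h"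

definition spe_profile :: "'p \<Rightarrow> 'v list \<Rightarrow> 'v" where
  "spe_profile i = next_move"

lemma move_edge: "(last h, move s h) \<in> E"
proof -
  have "\<exists>w. (last h, w) \<in> E"
    using edges unfolding game_edges_def by blast
  then show ?thesis
    unfolding move_def by (simp add: someI_ex[of "\<lambda>w. (last h, w) \<in> E"])
qed

lemma move_Punish:
  assumes "k < length h"
  shows "move (Punish k) h = T (h ! k) (owner (last h)) (drop k h)"
proof -
  have "drop k h \<noteq> []" and "last (drop k h) = last h"
    using assms by simp_all
  then have "(last h, T (h ! k) (owner (last h)) (drop k h)) \<in> E"
    using T_profile[of "h ! k"] unfolding is_profile_def is_strategy_def by metis
  then show ?thesis
    by (simp add: move_def target_def)
qed

lemma mode_of_cong: "(\<And>i. i \<le> n \<Longrightarrow> \<pi> i = \<pi>' i) \<Longrightarrow> mode_of \<pi> n = mode_of \<pi>' n"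
proof (induction n)
  case (Suc n)
  then show ?case
    using pref_cong[of n \<pi> \<pi>'] by (simp add: mode_of.simps(2))
qed simp

lemma next_move_pref: "next_move (pref \<pi> n) = move (mode_of \<pi> n) (pref \<pi> n)"
  using mode_of_cong[of n "\<lambda>i. pref \<pi> n ! i" \<pi>] by (simp add: next_move_def)

lemma is_profile_spe_profile: "is_profile E owner spe_profile"
  unfolding is_profile_def is_strategy_def spe_profile_def next_move_def using move_edge by blast

lemma mode_of_change:
  assumes "mode_of \<pi> (Suc n) \<noteq> mode_of \<pi> n"
  shows "mode_of \<pi> (Suc n) = Punish n" and "\<pi> (Suc n) \<noteq> move (mode_of \<pi> n) (pref \<pi> n)"
  using assms
  by (auto simp: mode_of.simps(2) next_mode_def split: mode.splits if_splits)

lemma mode_of_Punish: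
  assumes "mode_of \<pi> n = Punish k"
  shows "k < n" and "\<And>n'. k < n' \<Longrightarrow> n' \<le> n \<Longrightarrow> mode_of \<pi> n' = Punish k"
proof -
  have "k < n \<and> (\<forall>n'. k < n' \<and> n' \<le> n \<longrightarrow> mode_of \<pi> n' = Punish k)"
    using assms
  proof (induction n)
    case (Suc n)
    then show ?case
      using mode_of_change[of \<pi> n] by (cases "mode_of \<pi> (Suc n) = mode_of \<pi> n") (auto simp: le_Suc_eq)
  qed simp
  then show "k < n" and "\<And>n'. k < n' \<Longrightarrow> n' \<le> n \<Longrightarrow> mode_of \<pi> n' = Punish k"
    by auto
qed

lemma mode_of_Follow:
  assumes "\<pi> 0 = v0" and "mode_of \<pi> n = Follow" and "i \<le> n"
  shows "\<pi> i = \<xi> i"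
  using assms(2,3)
proof (induction n arbitrary: i)
  case (Suc n)
  have stay: "mode_of \<pi> n = Follow" "\<pi> (Suc n) = move Follow (pref \<pi> n)"
    using Suc.prems(1) by (auto simp: mode_of.simps(2) next_mode_def split: if_splits mode.splits)
  then have "move Follow (pref \<pi> n) = \<xi> (Suc n)"
    using Suc.IH \<xi>_play by (simp add: move_def target_def is_play_def)
  then show ?case
    using Suc stay by (auto simp: le_Suc_eq)
qed (simp add: assms(1) \<xi>_0)

lemma follows_Punish:
  assumes "mode_of \<pi> n = Punish k" and "k < n'" and "n' < n" and "owner (\<pi> n') \<noteq> owner (\<pi> k)"
  shows "\<pi> (Suc n') = T (\<pi> k) (owner (\<pi> n')) (drop k (pref \<pi> n'))"
proof -
  have "mode_of \<pi> n' = Punish k" and "mode_of \<pi> (Suc n') = Punish k"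
    using mode_of_Punish(2)[OF assms(1)] assms(2,3) by auto
  then show ?thesis
    using assms(2,4) by (auto simp: mode_of.simps(2) next_mode_def move_Punish split: if_splits)
qed

lemma mode_of_after_deviation:
  assumes "\<pi> (Suc n) \<noteq> move (mode_of \<pi> n) (pref \<pi> n)"
  obtains k where "mode_of \<pi> (Suc n) = Punish k" and "owner (\<pi> k) = owner (\<pi> n)"
    and "lam (\<pi> k) \<le> lam (\<pi> n)"
proof (cases "mode_of \<pi> n")
  case Follow
  then show ?thesis
    using assms that by (simp add: mode_of.simps(2) next_mode_def)
next
  case (Punish k)
  have "k < n"
    using mode_of_Punish(1)[OF Punish] .
  show ?thesis
  proof (cases "owner (\<pi> k) = owner (\<pi> n) \<and> lam (\<pi> k) \<le> lam (\<pi> n)")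
    case True
    then show ?thesis
      using assms Punish \<open>k < n\<close> that[of k] by (simp add: mode_of.simps(2) next_mode_def)
  next
    case False
    then show ?thesis
      using assms Punish \<open>k < n\<close> that[of n] by (simp add: mode_of.simps(2) next_mode_def)
  qed
qed

lemma mode_of_stable:
  assumes "\<And>n. m \<le> n \<Longrightarrow> \<pi> (Suc n) = move (mode_of \<pi> n) (pref \<pi> n)" and "m \<le> n"
  shows "mode_of \<pi> n = mode_of \<pi> m"
  using assms(2) by (induction rule: dec_induct) (simp_all add: assms(1) mode_of.simps(2))

lemma mode_of_Suc_Punish:
  assumes "mode_of \<pi> n = Punish k" and "owner (\<pi> k) = j"
    and "owner (\<pi> n) \<noteq> j \<Longrightarrow> \<pi> (Suc n) = move (mode_of \<pi> n) (pref \<pi> n)"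
  shows "mode_of \<pi> (Suc n) = Punish k
    \<or> mode_of \<pi> (Suc n) = Punish n \<and> owner (\<pi> n) = j \<and> lam (\<pi> n) < lam (\<pi> k)"
proof (cases "mode_of \<pi> (Suc n) = Punish k")
  case False
  then have "owner (\<pi> n) = j"
    using assms(1,3) mode_of_change(2)[of \<pi> n] by auto
  moreover have "k < n"
    using mode_of_Punish(1)[OF assms(1)] .
  ultimately show ?thesis
    using assms(1,2) False by (auto simp: mode_of.simps(2) next_mode_def split: if_splits)
qed simp

lemma punishment_compatible:
  assumes "mode_of \<pi> n = Punish k"
  shows "compatible_minus owner (owner (\<pi> k)) (T (\<pi> k)) (drop k (pref \<pi> n))"
  unfolding compatible_minus_def
proof (intro allI impI)
  fix i
  assume i: "Suc i < length (drop k (pref \<pi> n))"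
    and deviator: "owner (drop k (pref \<pi> n) ! i) \<noteq> owner (\<pi> k)"
  have "k < n"
    using mode_of_Punish(1)[OF assms] .
  then have "i \<noteq> 0"
    using deviator by (cases i) simp_all
  have "k + i < n"
    using i by simp
  then have "\<pi> (Suc (k + i)) = T (\<pi> k) (owner (\<pi> (k + i))) (drop k (pref \<pi> (k + i)))"
    using follows_Punish[OF assms] deviator \<open>i \<noteq> 0\<close> \<open>k + i < n\<close> by simp
  then show "drop k (pref \<pi> n) ! Suc i = T (\<pi> k) (owner (drop k (pref \<pi> n) ! i))
      (take (Suc i) (drop k (pref \<pi> n)))"
    using \<open>k + i < n\<close> by (simp add: drop_pref take_pref)
qed

lemma outcome_punishment:
  assumes "k \<le> m"
    and "\<And>t. \<pi> (Suc (Suc m + t)) = move (Punish k) (pref \<pi> (Suc m + t))"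
  shows "outcome owner (restr (T (\<pi> k)) (drop k (pref \<pi> m))) (\<pi> (Suc m)) = suffix \<pi> (Suc m)"
proof (rule outcome_unique)
  fix t
  have "drop k (pref \<pi> (Suc m + t)) = drop k (pref \<pi> m) @ pref (suffix \<pi> (Suc m)) t"
    unfolding pref_add using assms(1) by simp
  then show "suffix \<pi> (Suc m) (Suc t) = restr (T (\<pi> k)) (drop k (pref \<pi> m))
      (owner (suffix \<pi> (Suc m) t)) (pref (suffix \<pi> (Suc m)) t)"
    using assms by (simp add: move_Punish restr_def)
qed simp

lemma consistent_when_following:
  assumes "\<pi> 0 = v0" and "is_play E \<pi>"
    and follow: "\<And>n. m \<le> n \<Longrightarrow> \<pi> (Suc n) = move (mode_of \<pi> n) (pref \<pi> n)"
    and finite: "\<And>k. mode_of \<pi> m = Punish k \<Longrightarrow> lam (\<pi> k) \<noteq> \<infinity>"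
  shows "lam_consistent owner \<mu> lam (suffix \<pi> m)"
proof (cases "mode_of \<pi> m")
  case Follow
  have "\<pi> i = \<xi> i" for i
  proof -
    have "mode_of \<pi> (max i m) = Follow"
      using mode_of_stable[OF follow max.cobounded2] Follow by simp
    then show ?thesis
      using mode_of_Follow[of \<pi>, OF assms(1)] by simp
  qed
  then show ?thesis
    using \<xi>_consistent lam_consistent_suffix by (metis ext)
next
  case (Punish k)
  obtain m' where m: "m = Suc m'" and "k \<le> m'"
    using mode_of_Punish(1)[OF Punish] by (metis less_Suc_eq_le less_imp_Suc_add)
  let ?h = "drop k (pref \<pi> m')"
  have h: "?h @ [\<pi> m] = drop k (pref \<pi> m)"
    using \<open>k \<le> m'\<close> m by (simp add: pref_Suc)
  have "\<pi> (Suc (m + t)) = move (Punish k) (pref \<pi> (m + t))" for t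
    using follow[OF le_add1] mode_of_stable[OF follow le_add1] Punish by simp
  then have "outcome owner (restr (T (\<pi> k)) ?h) (\<pi> m) = suffix \<pi> m"
    using outcome_punishment[OF \<open>k \<le> m'\<close>] m by simp
  moreover have "lam_consistent owner \<mu> lam (outcome owner (restr (T (\<pi> k)) ?h) (\<pi> m))"
  proof (rule T_consistent)
    show "lam (\<pi> k) \<noteq> \<infinity>"
      using finite[OF Punish] .
    show "is_hist E (?h @ [\<pi> m])"
      unfolding h using is_hist_drop[OF is_hist_pref[OF assms(2)]] \<open>k \<le> m'\<close> m by simp
    show "hd (?h @ [\<pi> m]) = \<pi> k"
      unfolding h using \<open>k \<le> m'\<close> m by (simp add: hd_drop_conv_nth)
    show "compatible_minus owner (owner (\<pi> k)) (T (\<pi> k)) (?h @ [\<pi> m])"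
      unfolding h using punishment_compatible[OF Punish] .
  qed
  ultimately show ?thesis
    by simp
qed

lemma following_continuation:
  assumes "is_play E \<pi>"
  obtains \<pi>' where "is_play E \<pi>'" and "\<And>i. i \<le> n \<Longrightarrow> \<pi>' i = \<pi> i"
    and "\<And>n'. n \<le> n' \<Longrightarrow> \<pi>' (Suc n') = move (mode_of \<pi>' n') (pref \<pi>' n')"
proof -
  define h where "h = map \<pi> [0..<n]"
  define \<pi>' where "\<pi>' = conc h (outcome owner (restr spe_profile h) (\<pi> n))"
  have h: "h @ [\<pi> n] = pref \<pi> n" and "length h = n"
    by (simp_all add: h_def pref_def)
  show ?thesis
  proof (rule that)
    show "is_play E \<pi>'"
      unfolding \<pi>'_def using is_play_conc_outcome[OF is_profile_spe_profile] is_hist_pref[OF assms] h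
      by metis
    show "\<pi>' i = \<pi> i" if "i \<le> n" for i
      using conc_nth_le[of i h] that h \<open>length h = n\<close> unfolding \<pi>'_def by (metis nth_pref)
    show "\<pi>' (Suc n') = move (mode_of \<pi>' n') (pref \<pi>' n')" if "n \<le> n'" for n'
      using conc_outcome_Suc[of h n' owner spe_profile "\<pi> n"] that \<open>length h = n\<close>
      unfolding \<pi>'_def by (simp add: spe_profile_def next_move_pref)
  qed
qed

lemma punished_requirement_finite:
  assumes "is_play E \<pi>" and "\<pi> 0 = v0" and "mode_of \<pi> n = Punish k"
  shows "lam (\<pi> k) \<noteq> \<infinity>"
  using assms
proof (induction n arbitrary: \<pi> k)
  case (Suc n)
  show ?case
  proof (cases "mode_of \<pi> (Suc n) = mode_of \<pi> n")
    case True
    then show ?thesis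
      using Suc.IH[OF Suc.prems(1,2)] Suc.prems(3) by simp
  next
    case False
    then have "k = n"
      using mode_of_change(1)[OF False] Suc.prems(3) by simp
    obtain \<pi>' where \<pi>': "is_play E \<pi>'" "\<And>i. i \<le> n \<Longrightarrow> \<pi>' i = \<pi> i"
      and follow: "\<And>n'. n \<le> n' \<Longrightarrow> \<pi>' (Suc n') = move (mode_of \<pi>' n') (pref \<pi>' n')"
      using following_continuation[OF Suc.prems(1)] by blast
    have "\<pi>' 0 = v0"
      using \<pi>'(2)[of 0] Suc.prems(2) by simp
    then have "lam_consistent owner \<mu> lam (suffix \<pi>' n)"
      using consistent_when_following[OF _ \<pi>'(1) follow Suc.IH[OF \<pi>'(1)]] by blast
    then have "lam (\<pi>' n) \<le> ereal (\<mu> (suffix \<pi>' n) (owner (\<pi>' n)))"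
      using lam_consistent_suffixD by blast
    then show ?thesis
      using \<pi>'(2)[of n] \<open>k = n\<close> by auto
  qed
qed simp

lemma deviator_punishment_stabilises:
  assumes follow: "\<And>n. m \<le> n \<Longrightarrow> owner (\<pi> n) \<noteq> j \<Longrightarrow> \<pi> (Suc n) = move (mode_of \<pi> n) (pref \<pi> n)"
    and start: "mode_of \<pi> m = Punish k" "owner (\<pi> k) = j"
  obtains K where "\<And>n. K < n \<Longrightarrow> mode_of \<pi> n = Punish K" and "owner (\<pi> K) = j"
    and "lam (\<pi> K) \<le> lam (\<pi> k)"
proof -
  have step: "mode_of \<pi> (Suc n) = Punish k' \<or> mode_of \<pi> (Suc n) = Punish n \<and> owner (\<pi> n) = j
      \<and> lam (\<pi> n) < lam (\<pi> k')"
    if "m \<le> n" "mode_of \<pi> n = Punish k'" "owner (\<pi> k') = j" for n k'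
    using mode_of_Suc_Punish[OF that(2,3)] follow[OF that(1)] by blast
  have punishing_j: "\<exists>k'. mode_of \<pi> n = Punish k' \<and> owner (\<pi> k') = j" if "m \<le> n" for n
    using that by (induction rule: dec_induct) (use start step in blast)+
  define punished where "punished n = (case mode_of \<pi> n of Punish k' \<Rightarrow> k' | Follow \<Rightarrow> 0)" for n
  have mode_eq: "mode_of \<pi> n = Punish (punished n)" and owner_eq: "owner (\<pi> (punished n)) = j"
    if "m \<le> n" for n
    using punishing_j[OF that] by (auto simp: punished_def)
  have "finite ((\<lambda>n. lam (\<pi> (punished n))) ` {m..})"
    by (rule finite_subset[of _ "range lam"]) auto
  then obtain N where "m \<le> N" and min: "\<And>n. m \<le> n \<Longrightarrow> lam (\<pi> (punished N)) \<le> lam (\<pi> (punished n))"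
    and stable: "\<And>n. N \<le> n \<Longrightarrow> mode_of \<pi> n = mode_of \<pi> N"
  proof (rule eventually_const_by_descent)
    fix n
    assume "m \<le> n"
    have "mode_of \<pi> (Suc n) = Punish (punished (Suc n))"
      using mode_eq \<open>m \<le> n\<close> by simp
    then have "punished (Suc n) = punished n \<or> lam (\<pi> (punished (Suc n))) < lam (\<pi> (punished n))"
      using step[OF \<open>m \<le> n\<close> mode_eq owner_eq] \<open>m \<le> n\<close> by auto
    then show "lam (\<pi> (punished (Suc n))) \<le> lam (\<pi> (punished n))"
      and "mode_of \<pi> (Suc n) \<noteq> mode_of \<pi> n \<Longrightarrow> lam (\<pi> (punished (Suc n))) < lam (\<pi> (punished n))"
      using mode_eq \<open>m \<le> n\<close> by auto
  qed blast
  show ?thesis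
  proof (rule that)
    show "mode_of \<pi> n = Punish (punished N)" if "punished N < n" for n
      using that mode_of_Punish(2)[OF mode_eq[OF \<open>m \<le> N\<close>]] stable[of n] mode_eq[OF \<open>m \<le> N\<close>]
      by (cases "n \<le> N") auto
    show "owner (\<pi> (punished N)) = j"
      using owner_eq[OF \<open>m \<le> N\<close>] .
    show "lam (\<pi> (punished N)) \<le> lam (\<pi> k)"
      using min[of m] mode_eq[of m] start(1) by simp
  qed
qed

lemma punished_payoff_le:
  assumes "is_play E \<pi>" and punish: "\<And>n. K < n \<Longrightarrow> mode_of \<pi> n = Punish K"
    and "lam (\<pi> K) \<noteq> \<infinity>"
  shows "ereal (\<mu> \<pi> (owner (\<pi> K))) \<le> lam (\<pi> K) + ereal \<epsilon>"
proof -
  let ?u = "\<pi> K"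
  have "ereal (\<mu> (suffix \<pi> K) (owner ?u)) \<le> best_value E owner \<mu> (owner ?u) (suffix \<pi> K 0) (T ?u)"
  proof (rule best_value_ge[OF edges is_play_suffix[OF assms(1)]])
    fix t
    assume "owner (suffix \<pi> K t) \<noteq> owner ?u"
    then have "owner (\<pi> (K + t)) \<noteq> owner ?u"
      by simp
    moreover from this have "t \<noteq> 0"
      by (cases t) simp_all
    ultimately show "suffix \<pi> K (Suc t) = T ?u (owner (suffix \<pi> K t)) (pref (suffix \<pi> K) t)"
      using follows_Punish[OF punish[of "Suc (K + t)"]] by (simp add: drop_pref)
  qed
  also have "\<dots> \<le> lam ?u + ereal \<epsilon>"
    using T_best[OF assms(3)] by simp
  finally show ?thesis
    using prefix_independent_suffix[OF prefix_indep assms(1)] by simp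
qed

lemma deviator_payoff_le:
  assumes "is_play E \<pi>"
    and follow: "\<And>n'. Suc n \<le> n' \<Longrightarrow> owner (\<pi> n') \<noteq> j \<Longrightarrow> \<pi> (Suc n') = move (mode_of \<pi> n') (pref \<pi> n')"
    and deviation: "\<pi> (Suc n) \<noteq> move (mode_of \<pi> n) (pref \<pi> n)" and "owner (\<pi> n) = j"
    and "lam (\<pi> n) \<noteq> \<infinity>"
  shows "ereal (\<mu> \<pi> j) \<le> lam (\<pi> n) + ereal \<epsilon>"
proof -
  obtain k where k: "mode_of \<pi> (Suc n) = Punish k" "owner (\<pi> k) = j" "lam (\<pi> k) \<le> lam (\<pi> n)"
    using mode_of_after_deviation[OF deviation] assms(4) by metis
  obtain K where K: "\<And>n'. K < n' \<Longrightarrow> mode_of \<pi> n' = Punish K" "owner (\<pi> K) = j"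
    "lam (\<pi> K) \<le> lam (\<pi> k)"
    using deviator_punishment_stabilises[OF follow k(1,2)] by blast
  have "lam (\<pi> K) \<le> lam (\<pi> n)"
    using K(3) k(3) by (rule order_trans)
  then have "ereal (\<mu> \<pi> j) \<le> lam (\<pi> K) + ereal \<epsilon>"
    using punished_payoff_le[OF assms(1) K(1)] K(2) assms(5) by force
  also have "\<dots> \<le> lam (\<pi> n) + ereal \<epsilon>"
    using \<open>lam (\<pi> K) \<le> lam (\<pi> n)\<close> by (rule add_right_mono)
  finally show ?thesis .
qed

lemma deviation_gain_le:
  assumes hist: "is_hist E (h @ [v])" and "hd (h @ [v]) = v0" and "is_strategy E owner j \<sigma>'"
  shows "\<mu> (conc h (outcome owner (restr (spe_profile(j := \<sigma>')) h) v)) j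
    \<le> \<mu> (conc h (outcome owner (restr spe_profile h) v)) j + \<epsilon>"
proof -
  define \<pi> where "\<pi> = conc h (outcome owner (restr spe_profile h) v)"
  define \<pi>' where "\<pi>' = conc h (outcome owner (restr (spe_profile(j := \<sigma>')) h) v)"
  have plays: "is_play E \<pi>" "is_play E \<pi>'"
    unfolding \<pi>_def \<pi>'_def
    using is_play_conc_outcome[OF _ hist] is_profile_spe_profile
      is_profile_fun_upd[OF is_profile_spe_profile assms(3)] by auto
  have agree: "\<pi> i = \<pi>' i" if "i \<le> length h" for i
    using conc_nth_le[OF that, of owner "restr spe_profile h" v]
      conc_nth_le[OF that, of owner "restr (spe_profile(j := \<sigma>')) h" v]
    by (simp add: \<pi>_def \<pi>'_def)
  have "\<pi> 0 = v0"
    using conc_nth_le[of 0 h owner "restr spe_profile h" v] assms(2) by (simp add: \<pi>_def hd_conv_nth)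
  have follow: "\<pi> (Suc n) = move (mode_of \<pi> n) (pref \<pi> n)" if "length h \<le> n" for n
    using conc_outcome_Suc[OF that, of owner spe_profile v]
    by (simp add: \<pi>_def spe_profile_def next_move_pref)
  have follow': "\<pi>' (Suc n) = move (mode_of \<pi>' n) (pref \<pi>' n)" if "length h \<le> n" "owner (\<pi>' n) \<noteq> j"
    for n
    using conc_outcome_Suc[OF that(1), of owner "spe_profile(j := \<sigma>')" v] that(2)
    by (simp add: \<pi>'_def spe_profile_def next_move_pref)
  show ?thesis
  proof (cases "\<pi> = \<pi>'")
    case True
    then show ?thesis
      using eps_nonneg by (simp add: \<pi>_def \<pi>'_def)
  next
    case False
    then obtain n where same: "\<And>i. i \<le> n \<Longrightarrow> \<pi> i = \<pi>' i" and "\<pi> (Suc n) \<noteq> \<pi>' (Suc n)"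
      using agree[of 0] first_difference by blast
    moreover have "length h \<le> n"
      using agree \<open>\<pi> (Suc n) \<noteq> \<pi>' (Suc n)\<close> by (meson not_less_eq_eq)
    ultimately have deviation: "\<pi>' (Suc n) \<noteq> move (mode_of \<pi>' n) (pref \<pi>' n)"
      using follow mode_of_cong[of n \<pi> \<pi>'] pref_cong[of n \<pi> \<pi>'] by metis
    then have "owner (\<pi>' n) = j"
      using follow' \<open>length h \<le> n\<close> by blast
    have "lam_consistent owner \<mu> lam (suffix \<pi> (length h))"
      using consistent_when_following[OF \<open>\<pi> 0 = v0\<close> plays(1) follow]
        punished_requirement_finite[OF plays(1) \<open>\<pi> 0 = v0\<close>] by blast
    then have "lam (\<pi> n) \<le> ereal (\<mu> (suffix \<pi> n) (owner (\<pi> n)))"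
      using \<open>length h \<le> n\<close> by (rule lam_consistent_suffixD)
    then have complying: "lam (\<pi>' n) \<le> ereal (\<mu> \<pi> j)"
      using \<open>owner (\<pi>' n) = j\<close> same[of n] prefix_independent_suffix[OF prefix_indep plays(1)]
      by simp
    have "\<pi>' (Suc n') = move (mode_of \<pi>' n') (pref \<pi>' n')" if "Suc n \<le> n'" "owner (\<pi>' n') \<noteq> j"
      for n'
      by (rule follow') (use that \<open>length h \<le> n\<close> in auto)
    then have "ereal (\<mu> \<pi>' j) \<le> lam (\<pi>' n) + ereal \<epsilon>"
      using deviator_payoff_le[OF plays(2) _ deviation \<open>owner (\<pi>' n) = j\<close>] complying by force
    also have "\<dots> \<le> ereal (\<mu> \<pi> j) + ereal \<epsilon>"
      using complying by (rule add_right_mono)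
    finally show ?thesis
      by (simp add: \<pi>_def \<pi>'_def)
  qed
qed

lemma outcome_spe_profile: "outcome owner spe_profile v0 = \<xi>"
proof -
  have follow: "move Follow (pref \<xi> n) = \<xi> (Suc n)" for n
    using \<xi>_play by (simp add: move_def target_def is_play_def)
  have "mode_of \<xi> n = Follow" for n
    by (induction n) (simp_all add: mode_of.simps(2) follow)
  then show ?thesis
    using \<xi>_0 follow by (intro outcome_unique) (simp_all add: spe_profile_def next_move_pref)
qed

lemma eps_SPE_spe_profile: "eps_SPE E owner \<mu> \<epsilon> v0 spe_profile"
  unfolding eps_SPE_def using is_profile_spe_profile deviation_gain_le by blast

end

theorem mainTheorem5:
  fixes E :: "('v::finite \<times> 'v) set"
    and owner :: "'v \<Rightarrow> 'p::finite"
    and \<mu> :: "(nat \<Rightarrow> 'v) \<Rightarrow> 'p \<Rightarrow> real"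
    and v0 :: 'v and \<epsilon> :: real and lam :: "'v \<Rightarrow> ereal" and \<xi> :: "nat \<Rightarrow> 'v"
  assumes "game_edges E"
    and "well_initialized E v0"
    and "prefix_independent E \<mu>"
    and "steady_negotiation E owner \<mu>"
    and "\<epsilon> \<ge> 0"
    and "eps_fixed_point E owner \<mu> \<epsilon> lam"
    and "is_play E \<xi>" and "\<xi> 0 = v0" and "lam_consistent owner \<mu> lam \<xi>"
  shows "\<exists>\<sigma>. eps_SPE E owner \<mu> \<epsilon> v0 \<sigma> \<and> outcome owner \<sigma> v0 = \<xi>"
proof -
  obtain T :: "'v \<Rightarrow> 'p \<Rightarrow> 'v list \<Rightarrow> 'v" where
    "\<And>u. is_profile E owner (T u)"
    and "\<And>u h w. lam u \<noteq> \<infinity> \<Longrightarrow> is_hist E (h @ [w]) \<Longrightarrow> hd (h @ [w]) = u \<Longrightarrow>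
      compatible_minus owner (owner u) (T u) (h @ [w]) \<Longrightarrow>
      lam_consistent owner \<mu> lam (outcome owner (restr (T u) h) w)"
    and "\<And>u. lam u \<noteq> \<infinity> \<Longrightarrow> best_value E owner \<mu> (owner u) u (T u) \<le> lam u + ereal \<epsilon>"
    using punishment_profiles_exist[OF assms(1,4,6)] by blast
  then interpret punishment_construction E owner \<mu> \<epsilon> lam \<xi> v0 T
    using assms by unfold_locales blast+
  show ?thesis
    using eps_SPE_spe_profile outcome_spe_profile by blast
qed

end
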